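(* Let $\mathcal{A}=\mathcal{R}*_K\mathcal{S}*_L\mathcal{T}\in\mathbb{C}^{I_1\times\cdots\times I_N\times J_1\times\cdots\times J_M}$, where $\mathcal{R}\in\mathbb{C}^{I_1\times\cdots\times I_N\times H_1\times\cdots\times H_K}$, $\mathcal{S}\in\mathbb{C}^{H_1\times\cdots\times H_K\times G_1\times\cdots\times G_L}$ and $\mathcal{T}\in\mathbb{C}^{G_1\times\cdots\times G_L\times J_1\times\cdots\times J_M}$. Then $$\mathcal{A}_{\pi\dagger}=\mathcal{T}^{\dagger}*_L(\mathcal{A}*_M\mathcal{T}^{\dagger})^{\dagger}*_N\mathcal{A}*_M(\mathcal{R}^{\dagger}*_N\mathcal{A})^{\dagger}*_K\mathcal{R}^{\dagger},$$ and $\mathcal{A}_{\pi\dagger}$ is the unique tensor $\mathcal{X}\in\mathbb{C}^{J_1\times\cdots\times J_M\times I_1\times\cdots\times I_N}$ such that $\mathcal{X}*_N\mathcal{A}*_M\mathcal{X}=\mathcal{X}$, $\mathcal{A}*_M\mathcal{X}=\mathcal{A}*_M(\mathcal{R}^{\dagger}*_N\mathcal{A})^{\dagger}*_K\mathcal{R}^{\dagger}$ and $\mathcal{X}*_N\mathcal{A}=\mathcal{T}^{\dagger}*_L(\mathcal{A}*_M\mathcal{T}^{\dagger})^{\dagger}*_N\mathcal{A}$.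
   Context: $\mathbb{C}^{I_1\times\cdots\times I_N}$ denotes the set of complex tensors of order $N$ and dimension $I_1\times\cdots\times I_N$. For $\mathcal{A}\in\mathbb{C}^{I_1\times\cdots\times I_N\times K_1\times\cdots\times K_N}$ and $\mathcal{B}\in\mathbb{C}^{K_1\times\cdots\times K_N\times J_1\times\cdots\times J_M}$, the Einstein product $\mathcal{A}*_N\mathcal{B}$ is defined by $(\mathcal{A}*_N\mathcal{B})_{i_1\dots i_N j_1\dots j_M}=\sum_{k_1,\dots,k_N}a_{i_1\dots i_N k_1\dots k_N}b_{k_1\dots k_N j_1\dots j_M}$; it is associative. $\mathcal{A}^H$ denotes the conjugate transpose (swap the two groups of indices and conjugate entries). For $\mathcal{A}\in\mathbb{C}^{I_1\times\cdots\times I_N\times J_1\times\cdots\times J_M}$ the Moore–Penrose inverse $\mathcal{A}^{\dagger}$ is the unique $\mathcal{X}\in\mathbb{C}^{J_1\times\cdots\times J_M\times I_1\times\cdots\times I_N}$ with $\mathcal{A}*_M\mathcal{X}*_N\mathcal{A}=\mathcal{A}$, $\mathcal{X}*_N\mathcal{A}*_M\mathcal{X}=\mathcal{X}$, $(\mathcal{A}*_M\mathcal{X})^H=\mathcal{A}*_M\mathcal{X}$, $(\mathcal{X}*_N\mathcal{A})^H=\mathcal{X}*_N\mathcal{A}$. Given the factorization $\mathcal{A}=\mathcal{R}*_K\mathcal{S}*_L\mathcal{T}$ as in the claim, the product Moore–Penrose inverse of $\mathcal{A}$ (relative to this factorization) is $\mathcal{A}_{\pi\dagger}=\mathcal{T}^{\dagger}*_L(\mathcal{R}^{\dagger}*_N\mathcal{A}*_M\mathcal{T}^{\dagger})^{\dagger}*_K\mathcal{R}^{\dagger}$.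 *)

theory Defs
  imports Complex_Main
begin

text \<open>A complex tensor in C^(I_1 x ... x I_N x J_1 x ... x J_M) is represented as a
function of two grouped multi-indices: the first group ranges over the finite type 'i
(standing for the index set I_1 x ... x I_N), the second over the finite type 'j
(standing for J_1 x ... x J_M).  All notions used (Einstein product, conjugate
transpose, Moore-Penrose inverse) only depend on this grouping.\<close>

type_synonym ('i, 'j) tensor = "'i \<Rightarrow> 'j \<Rightarrow> complex"

definition einstein :: "('i, 'k::finite) tensor \<Rightarrow> ('k, 'j) tensor \<Rightarrow> ('i, 'j) tensor"
  (infixl "\<star>" 70) where
  "A \<star> B = (\<lambda>i j. \<Sum>k\<in>UNIV. A i k * B k j)"

definition ctrans :: "('i, 'j) tensor \<Rightarrow> ('j, 'i) tensor" where
  "ctrans A = (\<lambda>j i. cnj (A i j))"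

definition is_mp_inverse :: "('i::finite, 'j::finite) tensor \<Rightarrow> ('j, 'i) tensor \<Rightarrow> bool" where
  "is_mp_inverse A X \<longleftrightarrow>
     A \<star> X \<star> A = A \<and> X \<star> A \<star> X = X \<and>
     ctrans (A \<star> X) = A \<star> X \<and> ctrans (X \<star> A) = X \<star> A"

definition mp_inv :: "('i::finite, 'j::finite) tensor \<Rightarrow> ('j, 'i) tensor" where
  "mp_inv A = (THE X. is_mp_inverse A X)"

definition prod_mp_inv ::
  "('i::finite, 'h::finite) tensor \<Rightarrow> ('i, 'j::finite) tensor \<Rightarrow> ('g::finite, 'j) tensor
     \<Rightarrow> ('j, 'i) tensor" where
  "prod_mp_inv R A T = mp_inv T \<star> mp_inv (mp_inv R \<star> A \<star> mp_inv T) \<star> mp_inv R"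

end

theory Submission
  imports Defs "HOL-Analysis.Cartesian_Space" "HOL-Library.Function_Algebras"
begin

text \<open>
  Write \<open>B = R\<^sup>\<dagger> A T\<^sup>\<dagger>\<close>, so that \<open>A\<^sub>\<pi>\<^sub>\<dagger> = T\<^sup>\<dagger> B\<^sup>\<dagger> R\<^sup>\<dagger>\<close>.  Since \<open>A = R S T\<close>, we have
  \<open>R R\<^sup>\<dagger> A = A = A T\<^sup>\<dagger> T\<close>; hence \<open>B\<close> and \<open>R\<^sup>\<dagger> A\<close> have the same range and \<open>B\<close> and \<open>A T\<^sup>\<dagger>\<close>
  the same co-range.  The orthogonal projectors \<open>X X\<^sup>\<dagger>\<close> and \<open>X\<^sup>\<dagger> X\<close> depend only on the range
  and co-range of \<open>X\<close>, so \<open>B B\<^sup>\<dagger> = (R\<^sup>\<dagger> A)(R\<^sup>\<dagger> A)\<^sup>\<dagger>\<close> and \<open>B\<^sup>\<dagger> B = (A T\<^sup>\<dagger>)\<^sup>\<dagger>(A T\<^sup>\<dagger>)\<close>.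
  This gives the prescribed values of \<open>A A\<^sub>\<pi>\<^sub>\<dagger>\<close> and \<open>A\<^sub>\<pi>\<^sub>\<dagger> A\<close>, while \<open>A\<^sub>\<pi>\<^sub>\<dagger> A A\<^sub>\<pi>\<^sub>\<dagger> = A\<^sub>\<pi>\<^sub>\<dagger>\<close>
  holds for any \<open>R, T\<close>.  An outer inverse is determined by \<open>A X\<close> and \<open>X A\<close>, which gives
  uniqueness, and expanding \<open>X = (X A) X\<close> gives the closed formula.
\<close>

lemma einstein_assoc: "A \<star> B \<star> C = A \<star> (B \<star> C)"
  unfolding einstein_def
  by (intro ext) (simp add: sum_distrib_left sum_distrib_right mult.assoc, rule sum.swap)

lemma ctrans_einstein: "ctrans (A \<star> B) = ctrans B \<star> ctrans A"
  unfolding einstein_def ctrans_def by (simp add: fun_eq_iff mult.commute)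

lemma ctrans_ctrans [simp]: "ctrans (ctrans A) = A"
  unfolding ctrans_def by simp

lemma einstein_diff_right: "A \<star> (B - C) = A \<star> B - A \<star> C"
  unfolding einstein_def by (simp add: fun_eq_iff right_diff_distrib sum_subtractf)

lemma einstein_zero_right [simp]: "A \<star> 0 = 0"
  unfolding einstein_def by (simp add: fun_eq_iff)

lemma gram_eq_0_imp_eq_0:
  fixes E :: "('i::finite, 'j) tensor"
  assumes "ctrans E \<star> E = 0"
  shows "E = 0"
proof -
  have "E i j = 0" for i j
  proof -
    have "(\<Sum>k\<in>UNIV. E k j * cnj (E k j)) = 0"
      using fun_cong[OF fun_cong[OF assms, of j], of j]
      by (simp add: einstein_def ctrans_def mult.commute)
    then have "(\<Sum>k\<in>UNIV. complex_of_real ((cmod (E k j))\<^sup>2)) = 0"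
      by (simp only: complex_norm_square)
    then have "(\<Sum>k\<in>UNIV. (cmod (E k j))\<^sup>2) = 0"
      by (metis of_real_sum of_real_eq_0_iff)
    then show ?thesis
      by (simp add: sum_nonneg_eq_0_iff)
  qed
  then show ?thesis
    by (simp add: fun_eq_iff)
qed

lemma gram_cancel_left:
  fixes A :: "('i::finite, 'j::finite) tensor"
  assumes "ctrans A \<star> A \<star> P = ctrans A \<star> A \<star> Q"
  shows "A \<star> P = A \<star> Q"
proof -
  define E where "E = A \<star> (P - Q)"
  have "ctrans E \<star> E = ctrans (P - Q) \<star> (ctrans A \<star> A \<star> (P - Q))"
    by (simp add: E_def ctrans_einstein einstein_assoc)
  also have "\<dots> = 0"
    using assms by (simp add: einstein_diff_right)
  finally have "E = 0"
    by (rule gram_eq_0_imp_eq_0)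
  then show ?thesis
    by (simp add: E_def einstein_diff_right)
qed

lemma matrix_inner_inverse_exists:
  fixes A :: "'a::field ^ 'n ^ 'm"
  shows "\<exists>G. A ** G ** A = A"
proof -
  obtain g where g: "Vector_Spaces.linear (*s) (*s) g"
    and right_inverse: "\<forall>y\<in>range ((*v) A). A *v g y = y"
    using vec.linear_exists_right_inverse_on[OF matrix_vector_mul_linear_gen vec.subspace_UNIV]
    by blast
  have "A ** matrix g ** A = A"
    by (simp add: matrix_eq matrix_vector_mul_assoc[symmetric] matrix_works[OF g] right_inverse)
  then show ?thesis ..
qed

lemma einstein_eq_matrix_matrix_mult:
  "(A \<star> B) i j = ((\<chi> i k. A i k) ** (\<chi> k j. B k j)) $ i $ j"
  by (simp add: einstein_def matrix_matrix_mult_def)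

lemma inner_inverse_exists:
  fixes A :: "('i::finite, 'j::finite) tensor"
  shows "\<exists>G. A \<star> G \<star> A = A"
proof -
  obtain G where "(\<chi> i j. A i j) ** G ** (\<chi> i j. A i j) = (\<chi> i j. A i j)"
    using matrix_inner_inverse_exists by blast
  then have "A \<star> (\<lambda>j i. G $ j $ i) \<star> A = A"
    by (simp add: fun_eq_iff vec_eq_iff einstein_eq_matrix_matrix_mult matrix_matrix_mult_def)
  then show ?thesis
    by blast
qed

lemma einstein_delta_right [simp]: "A \<star> (\<lambda>k j. of_bool (k = j)) = A"
  by (simp add: einstein_def fun_eq_iff)

lemma ctrans_einstein_ctrans_self: "ctrans (A \<star> ctrans A) = A \<star> ctrans A"
  by (simp add: ctrans_einstein)

text \<open>The \<open>{1,3}\<close>-inverse \<open>G A\<^sup>H\<close>, where \<open>G\<close> is an inner inverse of the Gram tensor \<open>A\<^sup>H A\<close>.\<close>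

lemma inverse_13_exists:
  fixes A :: "('i::finite, 'j::finite) tensor"
  obtains Y where "A \<star> Y \<star> A = A" and "ctrans (A \<star> Y) = A \<star> Y"
proof -
  obtain G where G: "ctrans A \<star> A \<star> G \<star> (ctrans A \<star> A) = ctrans A \<star> A"
    using inner_inverse_exists by blast
  define Y where "Y = G \<star> ctrans A"
  have "ctrans A \<star> A \<star> (Y \<star> A) = ctrans A \<star> A \<star> (\<lambda>k j. of_bool (k = j))"
    using G by (simp add: Y_def einstein_assoc)
  then have AYA: "A \<star> Y \<star> A = A"
    by (metis gram_cancel_left einstein_delta_right einstein_assoc)
  then have "ctrans A \<star> ctrans Y \<star> ctrans A = ctrans A"
    by (metis ctrans_einstein einstein_assoc)
  then have "A \<star> Y = A \<star> G \<star> (ctrans A \<star> ctrans Y \<star> ctrans A)"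
    by (simp add: Y_def einstein_assoc)
  also have "\<dots> = A \<star> Y \<star> ctrans (A \<star> Y)"
    by (simp add: Y_def ctrans_einstein einstein_assoc)
  finally have "ctrans (A \<star> Y) = A \<star> Y"
    by (metis ctrans_einstein_ctrans_self)
  with AYA show ?thesis
    using that by blast
qed

lemma inverse_14_exists:
  fixes A :: "('i::finite, 'j::finite) tensor"
  obtains Z where "A \<star> Z \<star> A = A" and "ctrans (Z \<star> A) = Z \<star> A"
proof -
  obtain Y where inner: "ctrans A \<star> Y \<star> ctrans A = ctrans A"
    and hermitian: "ctrans (ctrans A \<star> Y) = ctrans A \<star> Y"
    by (rule inverse_13_exists)
  have "A \<star> ctrans Y \<star> A = A"
    using arg_cong[OF inner, of ctrans] by (simp add: ctrans_einstein einstein_assoc)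
  moreover have "ctrans (ctrans Y \<star> A) = ctrans Y \<star> A"
    using hermitian by (simp add: ctrans_einstein)
  ultimately show ?thesis
    using that by blast
qed

lemma mp_inverse_exists:
  fixes A :: "('i::finite, 'j::finite) tensor"
  shows "\<exists>X. is_mp_inverse A X"
proof -
  obtain Y where AYA: "A \<star> Y \<star> A = A" and AY: "ctrans (A \<star> Y) = A \<star> Y"
    by (rule inverse_13_exists)
  obtain Z where AZA: "A \<star> Z \<star> A = A" and ZA: "ctrans (Z \<star> A) = Z \<star> A"
    by (rule inverse_14_exists)
  define X where "X = Z \<star> A \<star> Y"
  have AX: "A \<star> X = A \<star> Y"
    using AZA by (metis X_def einstein_assoc)
  have XA: "X \<star> A = Z \<star> A"
    using AYA by (metis X_def einstein_assoc)
  have "A \<star> X \<star> A = A" and "X \<star> A \<star> X = X"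
    by (simp_all add: AX XA AYA) (metis X_def AZA einstein_assoc)
  then have "is_mp_inverse A X"
    unfolding is_mp_inverse_def using AX XA AY ZA by simp
  then show ?thesis
    by blast
qed

lemma mp_inverse_unique:
  fixes A :: "('i::finite, 'j::finite) tensor"
  assumes "is_mp_inverse A X" and "is_mp_inverse A X'"
  shows "X = X'"
proof -
  from assms have X: "A \<star> X \<star> A = A" "X \<star> A \<star> X = X"
      "ctrans (A \<star> X) = A \<star> X" "ctrans (X \<star> A) = X \<star> A"
    and X': "A \<star> X' \<star> A = A" "X' \<star> A \<star> X' = X'"
      "ctrans (A \<star> X') = A \<star> X'" "ctrans (X' \<star> A) = X' \<star> A"
    unfolding is_mp_inverse_def by blast+
  have AX: "A \<star> X = A \<star> X'"
  proof -
    have "A \<star> X = (A \<star> X' \<star> A) \<star> X"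
      using X'(1) by simp
    also have "\<dots> = ctrans (A \<star> X') \<star> ctrans (A \<star> X)"
      by (simp only: X(3) X'(3) einstein_assoc)
    also have "\<dots> = ctrans (A \<star> X \<star> A \<star> X')"
      by (simp add: ctrans_einstein einstein_assoc)
    also have "\<dots> = A \<star> X'"
      using X(1) X'(3) by simp
    finally show ?thesis .
  qed
  have XA: "X \<star> A = X' \<star> A"
  proof -
    have "X \<star> A = X \<star> (A \<star> X' \<star> A)"
      using X'(1) by simp
    also have "\<dots> = ctrans (X \<star> A) \<star> ctrans (X' \<star> A)"
      by (simp only: X(4) X'(4) einstein_assoc)
    also have "\<dots> = ctrans (X' \<star> (A \<star> X \<star> A))"
      by (simp add: ctrans_einstein einstein_assoc)
    also have "\<dots> = X' \<star> A"
      using X(1) X'(4) by simp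
    finally show ?thesis .
  qed
  have "X = X \<star> A \<star> X"
    using X(2) by simp
  also have "\<dots> = X' \<star> (A \<star> X')"
    using AX XA by (simp add: einstein_assoc)
  also have "\<dots> = X'"
    using X'(2) by (simp add: einstein_assoc)
  finally show ?thesis .
qed

lemma mp_inv_is_mp_inverse: "is_mp_inverse A (mp_inv A)"
proof -
  have "\<exists>!X. is_mp_inverse A X"
    using mp_inverse_exists mp_inverse_unique by blast
  then show ?thesis
    unfolding mp_inv_def by (rule theI')
qed

lemma mp_inv_penrose:
  fixes A :: "('i::finite, 'j::finite) tensor"
  shows "A \<star> mp_inv A \<star> A = A"
    and "mp_inv A \<star> A \<star> mp_inv A = mp_inv A"
    and "ctrans (A \<star> mp_inv A) = A \<star> mp_inv A"
    and "ctrans (mp_inv A \<star> A) = mp_inv A \<star> A"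
  using mp_inv_is_mp_inverse[of A] unfolding is_mp_inverse_def by simp_all

lemma einstein_mp_inv_absorb_left:
  assumes "C = B \<star> P"
  shows "B \<star> mp_inv B \<star> C = C"
  unfolding assms by (simp add: mp_inv_penrose(1) flip: einstein_assoc)

lemma einstein_mp_inv_absorb_right:
  assumes "C = P \<star> B"
  shows "C \<star> mp_inv B \<star> B = C"
proof -
  have "C \<star> mp_inv B \<star> B = P \<star> (B \<star> mp_inv B \<star> B)"
    unfolding assms by (simp add: einstein_assoc)
  then show ?thesis
    by (simp add: mp_inv_penrose(1) assms)
qed

lemma hermitian_eq_if_absorbing:
  assumes "ctrans P = P" and "ctrans Q = Q" and "P \<star> Q = Q" and "Q \<star> P = P"
  shows "P = Q"
proof -
  have "P = ctrans (Q \<star> P)"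
    using assms(1,4) by simp
  also have "\<dots> = P \<star> Q"
    using assms(1,2) by (simp add: ctrans_einstein)
  finally show ?thesis
    using assms(3) by simp
qed

lemma range_projector_eq:
  assumes "C = B \<star> P" and "B = C \<star> Q"
  shows "B \<star> mp_inv B = C \<star> mp_inv C"
proof (rule hermitian_eq_if_absorbing)
  show "ctrans (B \<star> mp_inv B) = B \<star> mp_inv B" and "ctrans (C \<star> mp_inv C) = C \<star> mp_inv C"
    by (rule mp_inv_penrose(3))+
  show "B \<star> mp_inv B \<star> (C \<star> mp_inv C) = C \<star> mp_inv C"
    using einstein_mp_inv_absorb_left[OF assms(1)] by (simp flip: einstein_assoc)
  show "C \<star> mp_inv C \<star> (B \<star> mp_inv B) = B \<star> mp_inv B"
    using einstein_mp_inv_absorb_left[OF assms(2)] by (simp flip: einstein_assoc)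
qed

lemma corange_projector_eq:
  assumes "C = P \<star> B" and "B = Q \<star> C"
  shows "mp_inv B \<star> B = mp_inv C \<star> C"
proof (rule hermitian_eq_if_absorbing)
  show herm_B: "ctrans (mp_inv B \<star> B) = mp_inv B \<star> B"
    and herm_C: "ctrans (mp_inv C \<star> C) = mp_inv C \<star> C"
    by (rule mp_inv_penrose(4))+
  have "mp_inv C \<star> C \<star> (mp_inv B \<star> B) = mp_inv C \<star> C"
    using einstein_mp_inv_absorb_right[OF assms(1)] by (simp add: einstein_assoc)
  then show "mp_inv B \<star> B \<star> (mp_inv C \<star> C) = mp_inv C \<star> C"
    using herm_B herm_C by (metis ctrans_einstein)
  have "mp_inv B \<star> B \<star> (mp_inv C \<star> C) = mp_inv B \<star> B"
    using einstein_mp_inv_absorb_right[OF assms(2)] by (simp add: einstein_assoc)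
  then show "mp_inv C \<star> C \<star> (mp_inv B \<star> B) = mp_inv B \<star> B"
    using herm_B herm_C by (metis ctrans_einstein)
qed

lemma outer_inverse_eqI:
  assumes "X \<star> A \<star> X = X" and "Y \<star> A \<star> Y = Y" and "A \<star> Y = A \<star> X" and "Y \<star> A = X \<star> A"
  shows "Y = X"
proof -
  have "Y = X \<star> A \<star> Y"
    using assms(2,4) by simp
  also have "\<dots> = X"
    using assms(1,3) by (simp add: einstein_assoc)
  finally show ?thesis .
qed

lemma prod_mp_inv_outer: "prod_mp_inv R A T \<star> A \<star> prod_mp_inv R A T = prod_mp_inv R A T"
proof -
  let ?B = "mp_inv R \<star> A \<star> mp_inv T"
  have "prod_mp_inv R A T \<star> A \<star> prod_mp_inv R A T = mp_inv T \<star> (mp_inv ?B \<star> ?B \<star> mp_inv ?B) \<star> mp_inv R"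
    by (simp add: prod_mp_inv_def einstein_assoc)
  then show ?thesis
    by (simp add: mp_inv_penrose(2) prod_mp_inv_def)
qed

lemma einstein_prod_mp_inv:
  assumes R: "R \<star> mp_inv R \<star> A = A" and T: "A \<star> mp_inv T \<star> T = A"
  shows "A \<star> prod_mp_inv R A T = A \<star> mp_inv (mp_inv R \<star> A) \<star> mp_inv R"
proof -
  let ?B = "mp_inv R \<star> A \<star> mp_inv T" and ?C = "mp_inv R \<star> A"
  have "?C = ?B \<star> T"
    using T by (simp add: einstein_assoc)
  then have BC: "?B \<star> mp_inv ?B = ?C \<star> mp_inv ?C"
    by (rule range_projector_eq) simp
  have "A \<star> prod_mp_inv R A T = R \<star> (?B \<star> mp_inv ?B) \<star> mp_inv R"
    by (simp add: R prod_mp_inv_def flip: einstein_assoc)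
  also have "\<dots> = R \<star> (?C \<star> mp_inv ?C) \<star> mp_inv R"
    by (simp only: BC)
  also have "\<dots> = A \<star> mp_inv ?C \<star> mp_inv R"
    by (simp add: R flip: einstein_assoc)
  finally show ?thesis .
qed

lemma prod_mp_inv_einstein:
  assumes R: "R \<star> mp_inv R \<star> A = A" and T: "A \<star> mp_inv T \<star> T = A"
  shows "prod_mp_inv R A T \<star> A = mp_inv T \<star> mp_inv (A \<star> mp_inv T) \<star> A"
proof -
  let ?B = "mp_inv R \<star> A \<star> mp_inv T" and ?D = "A \<star> mp_inv T"
  have "?D = R \<star> ?B"
    by (simp add: R flip: einstein_assoc)
  then have BD: "mp_inv ?B \<star> ?B = mp_inv ?D \<star> ?D"
    by (rule corange_projector_eq) (simp add: einstein_assoc)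
  have "prod_mp_inv R A T \<star> A = mp_inv T \<star> (mp_inv ?B \<star> ?B) \<star> T"
    using T by (simp add: prod_mp_inv_def einstein_assoc)
  also have "\<dots> = mp_inv T \<star> (mp_inv ?D \<star> ?D) \<star> T"
    by (simp only: BD)
  also have "\<dots> = mp_inv T \<star> mp_inv ?D \<star> A"
    using T by (simp add: einstein_assoc)
  finally show ?thesis .
qed

theorem theorem3p4:
  fixes R :: "('i::finite, 'h::finite) tensor"
    and S :: "('h, 'g::finite) tensor"
    and T :: "('g, 'j::finite) tensor"
    and A :: "('i, 'j) tensor"
  assumes "A = R \<star> S \<star> T"
  shows "prod_mp_inv R A T =
           mp_inv T \<star> mp_inv (A \<star> mp_inv T) \<star> A \<star> mp_inv (mp_inv R \<star> A) \<star> mp_inv R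
    \<and> (\<forall>X :: ('j, 'i) tensor.
          (X \<star> A \<star> X = X
           \<and> A \<star> X = A \<star> mp_inv (mp_inv R \<star> A) \<star> mp_inv R
           \<and> X \<star> A = mp_inv T \<star> mp_inv (A \<star> mp_inv T) \<star> A)
          \<longleftrightarrow> X = prod_mp_inv R A T)"
proof -
  let ?X = "prod_mp_inv R A T"
  have R: "R \<star> mp_inv R \<star> A = A"
    by (rule einstein_mp_inv_absorb_left) (simp add: assms einstein_assoc)
  have T: "A \<star> mp_inv T \<star> T = A"
    by (rule einstein_mp_inv_absorb_right) (simp add: assms)
  note outer = prod_mp_inv_outer[of R A T]
  note AX = einstein_prod_mp_inv[OF R T]
  note XA = prod_mp_inv_einstein[OF R T]
  have "?X = ?X \<star> A \<star> ?X"
    using outer by simp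
  also have "\<dots> = mp_inv T \<star> mp_inv (A \<star> mp_inv T) \<star> (A \<star> ?X)"
    unfolding XA by (simp add: einstein_assoc)
  finally have "?X = mp_inv T \<star> mp_inv (A \<star> mp_inv T) \<star> A \<star> mp_inv (mp_inv R \<star> A) \<star> mp_inv R"
    unfolding AX by (simp add: einstein_assoc)
  moreover have "(Y \<star> A \<star> Y = Y \<and> A \<star> Y = A \<star> mp_inv (mp_inv R \<star> A) \<star> mp_inv R
      \<and> Y \<star> A = mp_inv T \<star> mp_inv (A \<star> mp_inv T) \<star> A) \<longleftrightarrow> Y = ?X" for Y
    using outer_inverse_eqI[OF outer, of Y] outer AX XA by auto
  ultimately show ?thesis
    by blast
qed

end
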